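(* For any group $A$, the assignment $q\mapsto\mathrm{Ker}(q)$ yields a bijection $$\bigsqcup_{B<A}\mathcal Z^1(\mathsf T^l_{\imath_B},(B,m_B))\;\cong\;\mathsf{FAC}(A),$$ sending $q$ in the $B$-summand to $(B,\mathrm{Ker}(q))$, where $B$ ranges over proper subgroups of $A$ and $\imath_B:B\hookrightarrow A$ is the inclusion.
   Context: For a subgroup $B$ of $A$ with inclusion $\imath_B$, $\mathcal Z^1(\mathsf T^l_{\imath_B},(B,m_B))$ is identified with the set of maps $q:A\to B$ satisfying (ZL1) $q(1_A)=1_A$; (ZL2) $q(ba)=b\,q(a)$ for all $a\in A,b\in B$; (ZL3) $q(aa')=q(a\,q(a'))$ for all $a,a'\in A$ (these are exactly the algebra structures on the left $B$-set $B$ for the monad $A\otimes_B-$ on left $B$-sets). $\mathrm{Ker}(q)=\{a:q(a)=1_A\}$. $\mathsf{FAC}(A)$ is the set of pairs $(B,X)$ with $B$ a proper subgroup of $A$, $X$ a subgroup of $A$, $B\cap X=\{1_A\}$ and $BX=A$. *)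

theory Defs
  imports "HOL-Algebra.Algebra" "HOL-Library.FuncSet"
begin

definition Z1_incl :: "('a, 'b) monoid_scheme \<Rightarrow> 'a set \<Rightarrow> ('a \<Rightarrow> 'a) set" where
  "Z1_incl A B = {q \<in> carrier A \<rightarrow>\<^sub>E B.
      q \<one>\<^bsub>A\<^esub> = \<one>\<^bsub>A\<^esub>
    \<and> (\<forall>a\<in>carrier A. \<forall>b\<in>B. q (b \<otimes>\<^bsub>A\<^esub> a) = b \<otimes>\<^bsub>A\<^esub> q a)
    \<and> (\<forall>a\<in>carrier A. \<forall>a'\<in>carrier A. q (a \<otimes>\<^bsub>A\<^esub> a') = q (a \<otimes>\<^bsub>A\<^esub> q a'))}"

definition Ker_q :: "('a, 'b) monoid_scheme \<Rightarrow> ('a \<Rightarrow> 'a) \<Rightarrow> 'a set" where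
  "Ker_q A q = {a \<in> carrier A. q a = \<one>\<^bsub>A\<^esub>}"

definition FAC :: "('a, 'b) monoid_scheme \<Rightarrow> ('a set \<times> 'a set) set" where
  "FAC A = {(H, K). subgroup H A \<and> H \<noteq> carrier A \<and> subgroup K A
      \<and> H \<inter> K = {\<one>\<^bsub>A\<^esub>} \<and> set_mult A H K = carrier A}"

end

theory Submission
  imports Defs
begin

text \<open>For a cocycle q on a subgroup B, every a factors as a = q a \<otimes> (inv (q a) \<otimes> a) with the
  second factor in Ker q, and B \<inter> Ker q = {\<one>}; so Ker q is a complement of B and q a is the
  B-component of a in that factorisation. Conversely, for a complement K of B the B-component
  of the (unique) factorisation through B and K is a cocycle with kernel K.\<close>

definition complement_proj :: "('a, 'b) monoid_scheme \<Rightarrow> 'a set \<Rightarrow> 'a set \<Rightarrow> 'a \<Rightarrow> 'a" where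
  "complement_proj G B K = (\<lambda>a\<in>carrier G. THE b. b \<in> B \<and> inv\<^bsub>G\<^esub> b \<otimes>\<^bsub>G\<^esub> a \<in> K)"

context group
begin

lemma Z1_inclD:
  assumes "q \<in> Z1_incl G B"
  shows Z1_incl_range: "a \<in> carrier G \<Longrightarrow> q a \<in> B"
    and Z1_incl_extensional: "a \<notin> carrier G \<Longrightarrow> q a = undefined"
    and Z1_incl_one: "q \<one> = \<one>"
    and Z1_incl_left_mult: "\<lbrakk>a \<in> carrier G; b \<in> B\<rbrakk> \<Longrightarrow> q (b \<otimes> a) = b \<otimes> q a"
    and Z1_incl_absorb: "\<lbrakk>a \<in> carrier G; a' \<in> carrier G\<rbrakk> \<Longrightarrow> q (a \<otimes> a') = q (a \<otimes> q a')"
  using assms unfolding Z1_incl_def by auto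

lemma Z1_incl_fixes_subgroup:
  assumes q: "q \<in> Z1_incl G B" and B: "subgroup B G" and b: "b \<in> B"
  shows "q b = b"
  using Z1_incl_left_mult[OF q one_closed b] Z1_incl_one[OF q] subgroup.mem_carrier[OF B b]
  by simp

lemma subgroup_Ker_q:
  assumes q: "q \<in> Z1_incl G B"
  shows "subgroup (Ker_q G q) G"
proof (rule subgroupI)
  show "Ker_q G q \<subseteq> carrier G" and "Ker_q G q \<noteq> {}"
    using Z1_incl_one[OF q] unfolding Ker_q_def by auto
next
  fix a assume "a \<in> Ker_q G q"
  then have a: "a \<in> carrier G" "q a = \<one>" unfolding Ker_q_def by auto
  have "q (inv a) = q (inv a \<otimes> a)"
    using Z1_incl_absorb[OF q, of "inv a" a] a by simp
  then show "inv a \<in> Ker_q G q"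
    using a Z1_incl_one[OF q] unfolding Ker_q_def by simp
next
  fix a c assume "a \<in> Ker_q G q" "c \<in> Ker_q G q"
  then have ac: "a \<in> carrier G" "q a = \<one>" "c \<in> carrier G" "q c = \<one>"
    unfolding Ker_q_def by auto
  then have "q (a \<otimes> c) = \<one>"
    using Z1_incl_absorb[OF q, of a c] by simp
  then show "a \<otimes> c \<in> Ker_q G q"
    using ac unfolding Ker_q_def by simp
qed

lemma Z1_incl_inter_Ker_q:
  assumes q: "q \<in> Z1_incl G B" and B: "subgroup B G"
  shows "B \<inter> Ker_q G q = {\<one>}"
  using Z1_incl_fixes_subgroup[OF q B] Z1_incl_one[OF q] subgroup.one_closed[OF B]
  unfolding Ker_q_def by auto

lemma inv_apply_mult_mem_Ker_q:
  assumes q: "q \<in> Z1_incl G B" and B: "subgroup B G" and a: "a \<in> carrier G"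
  shows "inv (q a) \<otimes> a \<in> Ker_q G q"
proof -
  have qa: "q a \<in> B" "q a \<in> carrier G"
    using Z1_incl_range[OF q a] subgroup.mem_carrier[OF B] by auto
  have "q (inv (q a) \<otimes> a) = inv (q a) \<otimes> q a"
    using Z1_incl_left_mult[OF q a subgroup.m_inv_closed[OF B qa(1)]] .
  then show ?thesis
    using qa a unfolding Ker_q_def by simp
qed

lemma set_mult_Ker_q:
  assumes q: "q \<in> Z1_incl G B" and B: "subgroup B G"
  shows "set_mult G B (Ker_q G q) = carrier G"
proof
  show "set_mult G B (Ker_q G q) \<subseteq> carrier G"
    using subgroup.subset[OF B] unfolding set_mult_def Ker_q_def by auto
next
  show "carrier G \<subseteq> set_mult G B (Ker_q G q)"
  proof
    fix a assume a: "a \<in> carrier G"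
    have qa: "q a \<in> B" "q a \<in> carrier G"
      using Z1_incl_range[OF q a] subgroup.mem_carrier[OF B] by auto
    have "a = q a \<otimes> (inv (q a) \<otimes> a)"
      using qa a by (simp add: m_assoc[symmetric])
    then show "a \<in> set_mult G B (Ker_q G q)"
      using qa(1) inv_apply_mult_mem_Ker_q[OF q B a] unfolding set_mult_def by blast
  qed
qed

lemma Ker_q_mem_FAC:
  assumes q: "q \<in> Z1_incl G B" and B: "subgroup B G" "B \<noteq> carrier G"
  shows "(B, Ker_q G q) \<in> FAC G"
  using B subgroup_Ker_q[OF q] Z1_incl_inter_Ker_q[OF q B(1)] set_mult_Ker_q[OF q B(1)]
  unfolding FAC_def by blast

lemma complement_factor_unique:
  assumes B: "subgroup B G" and K: "subgroup K G" and BK: "B \<inter> K = {\<one>}"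
    and a: "a \<in> carrier G" and b: "b \<in> B" "inv b \<otimes> a \<in> K" and c: "c \<in> B" "inv c \<otimes> a \<in> K"
  shows "b = c"
proof -
  have bc: "b \<in> carrier G" "c \<in> carrier G"
    using b c subgroup.mem_carrier[OF B] by auto
  have "(inv b \<otimes> a) \<otimes> inv (inv c \<otimes> a) = inv b \<otimes> c"
    using bc a by (simp add: inv_mult_group m_assoc) (simp add: m_assoc[symmetric])
  moreover have "(inv b \<otimes> a) \<otimes> inv (inv c \<otimes> a) \<in> K"
    using b(2) c(2) by (simp add: K subgroup.m_closed subgroup.m_inv_closed)
  moreover have "inv b \<otimes> c \<in> B"
    using b(1) c(1) by (simp add: B subgroup.m_closed subgroup.m_inv_closed)
  ultimately have "inv b \<otimes> c = \<one>"
    using BK by auto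
  then have "b \<otimes> (inv b \<otimes> c) = b"
    using bc by simp
  then show "b = c"
    using bc by (simp add: m_assoc[symmetric])
qed

lemma Z1_incl_apply_eq_iff:
  assumes q: "q \<in> Z1_incl G B" and B: "subgroup B G" and a: "a \<in> carrier G"
  shows "q a = b \<longleftrightarrow> b \<in> B \<and> inv b \<otimes> a \<in> Ker_q G q"
  using Z1_incl_range[OF q a] inv_apply_mult_mem_Ker_q[OF q B a]
    complement_factor_unique[OF B subgroup_Ker_q[OF q] Z1_incl_inter_Ker_q[OF q B] a]
  by blast

lemma Z1_incl_eq_if_Ker_q_eq:
  assumes q: "q \<in> Z1_incl G B" and q': "q' \<in> Z1_incl G B" and B: "subgroup B G"
    and Ker: "Ker_q G q = Ker_q G q'"
  shows "q = q'"
proof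
  fix a
  show "q a = q' a"
  proof (cases "a \<in> carrier G")
    case True
    then show ?thesis
      using Z1_incl_apply_eq_iff[OF q B True] Z1_incl_apply_eq_iff[OF q' B True] Ker by blast
  next
    case False
    then show ?thesis
      using Z1_incl_extensional[OF q] Z1_incl_extensional[OF q'] by simp
  qed
qed

context
  fixes B K
  assumes B: "subgroup B G" and K: "subgroup K G" and BK: "B \<inter> K = {\<one>}"
    and BK_gen: "set_mult G B K = carrier G"
begin

lemma complement_proj_mem:
  assumes a: "a \<in> carrier G"
  shows "complement_proj G B K a \<in> B" and "inv (complement_proj G B K a) \<otimes> a \<in> K"
proof -
  obtain b k where b: "b \<in> B" and k: "k \<in> K" and "a = b \<otimes> k"
    using a BK_gen unfolding set_mult_def by blast
  then have "inv b \<otimes> a = k"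
    using subgroup.mem_carrier[OF B b] subgroup.mem_carrier[OF K k]
    by (simp add: m_assoc[symmetric])
  then have "\<exists>!b. b \<in> B \<and> inv b \<otimes> a \<in> K"
    using b k complement_factor_unique[OF B K BK a] by auto
  from theI'[OF this] a
  have "complement_proj G B K a \<in> B \<and> inv (complement_proj G B K a) \<otimes> a \<in> K"
    unfolding complement_proj_def by simp
  then show "complement_proj G B K a \<in> B" and "inv (complement_proj G B K a) \<otimes> a \<in> K"
    by auto
qed

lemma complement_proj_eqI:
  assumes "a \<in> carrier G" "b \<in> B" "inv b \<otimes> a \<in> K"
  shows "complement_proj G B K a = b"
  using complement_factor_unique[OF B K BK] complement_proj_mem assms by blast

lemma complement_proj_closed: "a \<in> carrier G \<Longrightarrow> complement_proj G B K a \<in> carrier G"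
  using complement_proj_mem(1) subgroup.mem_carrier[OF B] by blast

lemma complement_proj_in_Z1_incl: "complement_proj G B K \<in> Z1_incl G B" (is "?q \<in> _")
  unfolding Z1_incl_def
proof (intro CollectI conjI ballI)
  show "?q \<in> carrier G \<rightarrow>\<^sub>E B"
    using complement_proj_mem(1) by (auto simp: complement_proj_def)
  show "?q \<one> = \<one>"
    using complement_proj_eqI[of \<one> \<one>] subgroup.one_closed[OF B] subgroup.one_closed[OF K]
    by simp
next
  fix a b assume a: "a \<in> carrier G" and b: "b \<in> B"
  have bc: "b \<in> carrier G"
    using b subgroup.mem_carrier[OF B] by blast
  have "inv (b \<otimes> ?q a) \<otimes> (b \<otimes> a) = inv (?q a) \<otimes> a"
    using a bc complement_proj_closed[OF a] by (simp add: inv_mult_group m_assoc[symmetric]) (simp add: m_assoc)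
  then show "?q (b \<otimes> a) = b \<otimes> ?q a"
    using complement_proj_eqI[of "b \<otimes> a" "b \<otimes> ?q a"] complement_proj_mem[OF a] a bc b
    by (simp add: B subgroup.m_closed)
next
  fix a a' assume a: "a \<in> carrier G" and a': "a' \<in> carrier G"
  define c where "c = ?q (a \<otimes> ?q a')"
  have aqa': "a \<otimes> ?q a' \<in> carrier G"
    using a complement_proj_closed[OF a'] by simp
  note c = complement_proj_mem[OF aqa', folded c_def]
  have cc: "c \<in> carrier G"
    using c(1) subgroup.mem_carrier[OF B] by blast
  \<comment> \<open>Multiply the two K-factors of a \<otimes> q a' and of a' to get the K-factor of a \<otimes> a'.\<close>
  have "(inv c \<otimes> (a \<otimes> ?q a')) \<otimes> (inv (?q a') \<otimes> a') = inv c \<otimes> (a \<otimes> a')"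
    using a a' complement_proj_closed[OF a'] cc by (simp add: m_assoc) (simp add: m_assoc[symmetric])
  moreover have "(inv c \<otimes> (a \<otimes> ?q a')) \<otimes> (inv (?q a') \<otimes> a') \<in> K"
    using c(2) complement_proj_mem(2)[OF a'] by (simp add: K subgroup.m_closed)
  ultimately show "?q (a \<otimes> a') = ?q (a \<otimes> ?q a')"
    using complement_proj_eqI[of "a \<otimes> a'" c] c(1) a a' unfolding c_def by simp
qed

lemma Ker_q_complement_proj: "Ker_q G (complement_proj G B K) = K"
proof
  show "Ker_q G (complement_proj G B K) \<subseteq> K"
    using complement_proj_mem(2) unfolding Ker_q_def by fastforce
  show "K \<subseteq> Ker_q G (complement_proj G B K)"
    using complement_proj_eqI[of _ \<one>] subgroup.one_closed[OF B] subgroup.mem_carrier[OF K]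
    unfolding Ker_q_def by auto
qed

end

lemma ex_Z1_incl_Ker_q_eq:
  assumes "(B, K) \<in> FAC G"
  shows "\<exists>q \<in> Z1_incl G B. Ker_q G q = K"
  using assms complement_proj_in_Z1_incl Ker_q_complement_proj unfolding FAC_def by blast

end

theorem theorem4p8:
  fixes A :: "('a, 'b) monoid_scheme"
  assumes "group A"
  shows "bij_betw (\<lambda>(B, q). (B, Ker_q A q))
           (SIGMA B:{B. subgroup B A \<and> B \<noteq> carrier A}. Z1_incl A B)
           (FAC A)"
proof -
  interpret group A by fact
  let ?S = "SIGMA B:{B. subgroup B A \<and> B \<noteq> carrier A}. Z1_incl A B"
  have "inj_on (\<lambda>(B, q). (B, Ker_q A q)) ?S"
    by (auto intro!: inj_onI dest: Z1_incl_eq_if_Ker_q_eq)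
  moreover have "(\<lambda>(B, q). (B, Ker_q A q)) ` ?S \<subseteq> FAC A"
    using Ker_q_mem_FAC by auto
  moreover have "FAC A \<subseteq> (\<lambda>(B, q). (B, Ker_q A q)) ` ?S"
  proof (clarify)
    fix B K assume F: "(B, K) \<in> FAC A"
    then obtain q where "q \<in> Z1_incl A B" "Ker_q A q = K"
      using ex_Z1_incl_Ker_q_eq by blast
    with F show "(B, K) \<in> (\<lambda>(B, q). (B, Ker_q A q)) ` ?S"
      unfolding FAC_def by (auto intro!: image_eqI[where x = "(B, q)"])
  qed
  ultimately show ?thesis
    unfolding bij_betw_def by blast
qed

end
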